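(* Let $s_\mathrm{in}>0$, let $\mu:[0,s_\mathrm{in}]\to[0,\infty)$ be continuously differentiable with $\mu(0)=0$, fix $\bar s\in(0,s_\mathrm{in})$ and numbers $0<D_{\min}<\mu(\bar s)<D_{\max}$. Consider the chemostat $\dot s=-\mu(s)b+D(s_\mathrm{in}-s)$, $\dot b=\mu(s)b-Db$ with the dynamic feedback $$D=\operatorname{sat}_{[D_{\min},D_{\max}]}\big(\bar D-G_1(s-\bar s)\big),\qquad \frac{d}{dt}\bar D=-G_2(s-\bar s)(\bar D-D_{\min})(D_{\max}-\bar D).$$ Then for any constants $G_1>0$, $G_2>0$ with $G_1>-\mu'(\bar s)$, the equilibrium $(s,b,\bar D)=(\bar s,\,s_\mathrm{in}-\bar s,\,\mu(\bar s))$ of the closed-loop system is locally exponentially stable; in particular, for solutions starting sufficiently close to it, $s(t)\to\bar s$ and $\lim_{t\to\infty}\bar D(t)=\lim_{t\to\infty}D(t)=\mu(\bar s)$.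
   Context: The saturation function is $\operatorname{sat}_{[D_{\min},D_{\max}]}(x)=D_{\max}$ if $x>D_{\max}$, $=x$ if $x\in[D_{\min},D_{\max}]$, $=D_{\min}$ if $x<D_{\min}$. *)

theory Defs
  imports "HOL-Analysis.Analysis"
begin

definition sat :: "real \<Rightarrow> real \<Rightarrow> real \<Rightarrow> real" where
  "sat Dmin Dmax x = (if x > Dmax then Dmax else if x < Dmin then Dmin else x)"

definition feedbackD :: "real \<Rightarrow> real \<Rightarrow> real \<Rightarrow> real \<Rightarrow> real \<Rightarrow> real \<Rightarrow> real" where
  "feedbackD Dmin Dmax G1 sbar s Dbar = sat Dmin Dmax (Dbar - G1 * (s - sbar))"

definition cl_solution ::
  "(real \<Rightarrow> real) \<Rightarrow> real \<Rightarrow> real \<Rightarrow> real \<Rightarrow> real \<Rightarrow> real \<Rightarrow> real \<Rightarrow> real \<Rightarrow>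
   (real \<Rightarrow> real) \<Rightarrow> (real \<Rightarrow> real) \<Rightarrow> (real \<Rightarrow> real) \<Rightarrow> bool" where
  "cl_solution \<mu> s_in sbar Dmin Dmax G1 G2 T s b Db \<longleftrightarrow>
     (\<forall>t\<in>{0..T}. s t \<in> {0..s_in} \<and>
        (let D = feedbackD Dmin Dmax G1 sbar (s t) (Db t) in
          (s has_real_derivative (- \<mu> (s t) * b t + D * (s_in - s t))) (at t within {0..T}) \<and>
          (b has_real_derivative (\<mu> (s t) * b t - D * b t)) (at t within {0..T}) \<and>
          (Db has_real_derivative (- G2 * (s t - sbar) * (Db t - Dmin) * (Dmax - Db t)))
             (at t within {0..T})))"

definition eq_dist ::
  "(real \<Rightarrow> real) \<Rightarrow> real \<Rightarrow> real \<Rightarrow> (real \<Rightarrow> real) \<Rightarrow> (real \<Rightarrow> real) \<Rightarrow> (real \<Rightarrow> real) \<Rightarrow> real \<Rightarrow> real" where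
  "eq_dist \<mu> s_in sbar s b Db t =
     sqrt ((s t - sbar)^2 + (b t - (s_in - sbar))^2 + (Db t - \<mu> sbar)^2)"

definition cl_locally_exp_stable ::
  "(real \<Rightarrow> real) \<Rightarrow> real \<Rightarrow> real \<Rightarrow> real \<Rightarrow> real \<Rightarrow> real \<Rightarrow> real \<Rightarrow> bool" where
  "cl_locally_exp_stable \<mu> s_in sbar Dmin Dmax G1 G2 \<longleftrightarrow>
     (\<exists>\<delta>>0. \<exists>c>0. \<exists>r>0. \<forall>T\<ge>0. \<forall>s b Db.
        cl_solution \<mu> s_in sbar Dmin Dmax G1 G2 T s b Db \<and> eq_dist \<mu> s_in sbar s b Db 0 < \<delta> \<longrightarrow>
        (\<forall>t\<in>{0..T}. eq_dist \<mu> s_in sbar s b Db t \<le> c * exp (- r * t) * eq_dist \<mu> s_in sbar s b Db 0))"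

end

theory Submission
  imports Defs
begin

text \<open>In the coordinates \<open>e = s - sbar\<close>, \<open>z = Dbar - \<mu> sbar\<close>, \<open>y = s + b - s_in\<close> the total
  mass obeys \<open>y' = - D y\<close> with \<open>D \<ge> Dmin > 0\<close>, and near the equilibrium the saturation is
  inactive, so the \<open>(e, z)\<close> part linearises to \<open>e' = - g e + B z\<close>, \<open>z' = - k e\<close> with
  \<open>g = B (G1 + \<mu>'(sbar)) > 0\<close> and \<open>k = G2 (\<mu>(sbar) - Dmin) (Dmax - \<mu>(sbar)) > 0\<close>, a Hurwitz
  matrix. A quadratic Lyapunov function \<open>V = k e\<^sup>2 - g e z + c z\<^sup>2 + M y\<^sup>2\<close> of the linearisation
  satisfies \<open>V' \<le> - a V\<close> on a small sublevel set, because the nonlinear remainders are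
  \<open>o(|e|)\<close>. Hence \<open>V\<close> decays exponentially and never leaves that sublevel set; since \<open>V\<close> is
  comparable to the squared distance from the equilibrium, the distance decays exponentially,
  and so do \<open>s - sbar\<close>, \<open>Dbar - \<mu>(sbar)\<close> and, the saturation being 1-Lipschitz, \<open>D - \<mu>(sbar)\<close>.\<close>

lemma exp_decay_until_exit:
  fixes V V' :: "real \<Rightarrow> real"
  assumes contV: "continuous_on {0..T} V"
    and derV: "\<And>t. 0 < t \<Longrightarrow> t < T \<Longrightarrow> V t < \<epsilon> \<Longrightarrow>
                 (V has_real_derivative V' t) (at t) \<and> V' t \<le> - a * V t"
    and t: "0 < t" "t \<le> T"
    and below: "\<And>u. 0 < u \<Longrightarrow> u < t \<Longrightarrow> V u < \<epsilon>"
  shows "V t \<le> V 0 * exp (- a * t)"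
proof -
  define W where "W u = V u * exp (a * u)" for u
  have cW: "continuous_on {0..t} W"
    unfolding W_def by (intro continuous_intros continuous_on_subset[OF contV]) (use t in auto)
  have dW: "(W has_real_derivative exp (a * u) * (V' u + a * V u)) (at u)" if "0 < u" "u < t" for u
  proof -
    have "(V has_real_derivative V' u) (at u)" using derV[of u] below[of u] that t by auto
    then show ?thesis unfolding W_def by (auto intro!: derivative_eq_intros simp: algebra_simps)
  qed
  obtain l z where lz: "0 < z" "z < t" "DERIV W z :> l" "W t - W 0 = (t - 0) * l"
    using MVT[OF t(1) cW] dW by (meson real_differentiable_def)
  have "l = exp (a * z) * (V' z + a * V z)"
    using DERIV_unique[OF lz(3) dW[OF lz(1,2)]] .
  also have "\<dots> \<le> 0"
    using derV[of z] below[of z] lz t by (simp add: mult_nonneg_nonpos)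
  finally have "W t \<le> W 0" using lz(4) t mult_nonneg_nonpos[of t l] by simp
  then have "V t * exp (a * t) * exp (- a * t) \<le> V 0 * exp (- a * t)"
    unfolding W_def by (simp add: mult_right_mono)
  then show ?thesis by (simp add: mult.assoc flip: exp_add)
qed

text \<open>First-exit argument: at the first time \<open>V\<close> reached \<open>(V 0 + \<epsilon>) / 2\<close> it would already have
  decayed below \<open>V 0\<close>, so \<open>V\<close> stays below \<open>\<epsilon>\<close>.\<close>
lemma lyapunov_exp_decay:
  fixes V V' :: "real \<Rightarrow> real"
  assumes contV: "continuous_on {0..T} V"
    and derV: "\<And>t. 0 < t \<Longrightarrow> t < T \<Longrightarrow> V t < \<epsilon> \<Longrightarrow>
                 (V has_real_derivative V' t) (at t) \<and> V' t \<le> - a * V t"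
    and V0: "0 \<le> V 0" "V 0 < \<epsilon>" and a: "a \<ge> 0"
  shows "\<forall>t\<in>{0..T}. V t \<le> V 0 * exp (- a * t)"
proof -
  have below: "V t < \<epsilon>" if t: "t \<in> {0..T}" for t
  proof (rule ccontr)
    assume "\<not> V t < \<epsilon>"
    define c where "c = (V 0 + \<epsilon>) / 2"
    have c: "V 0 < c" "c < \<epsilon>" using V0 unfolding c_def by auto
    define S where "S = {0..t} \<inter> V -` {c..}"
    have "closed S" unfolding S_def
      by (intro continuous_closed_preimage continuous_on_subset[OF contV]) (use t in auto)
    moreover have "t \<in> S" using \<open>\<not> V t < \<epsilon>\<close> c t unfolding S_def by auto
    moreover have bdd: "bdd_below S" unfolding S_def by (auto intro: bdd_belowI[of _ 0])
    ultimately have "Inf S \<in> S" using closed_contains_Inf by blast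
    define t1 where "t1 = Inf S"
    have t1: "0 \<le> t1" "t1 \<le> t" "c \<le> V t1" using \<open>Inf S \<in> S\<close> unfolding S_def t1_def by auto
    with c have "0 < t1" by (cases "t1 = 0") auto
    have "V u < \<epsilon>" if "0 < u" "u < t1" for u
    proof -
      have "u \<notin> S" using that cInf_lower[OF _ bdd, of u] unfolding t1_def by force
      then show ?thesis using that t1 c unfolding S_def by auto
    qed
    then have "V t1 \<le> V 0 * exp (- a * t1)"
      using exp_decay_until_exit[OF contV derV \<open>0 < t1\<close>] t1 t by auto
    also have "\<dots> \<le> V 0" using V0 a t1 by (simp add: mult_left_le)
    finally show False using t1 c by auto
  qed
  show ?thesis
  proof
    fix t assume t: "t \<in> {0..T}"
    show "V t \<le> V 0 * exp (- a * t)"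
    proof (cases "t = 0")
      case False
      show ?thesis by (rule exp_decay_until_exit[where \<epsilon>=\<epsilon>, OF contV derV]) (use t below False in auto)
    qed simp
  qed
qed

lemma sat_id: "Dmin \<le> x \<Longrightarrow> x \<le> Dmax \<Longrightarrow> sat Dmin Dmax x = x"
  unfolding sat_def by auto

lemma sat_ge_lower: "Dmin \<le> Dmax \<Longrightarrow> Dmin \<le> sat Dmin Dmax x"
  unfolding sat_def by auto

lemma sat_dist_le: "Dmin \<le> Dmax \<Longrightarrow> \<bar>sat Dmin Dmax x - sat Dmin Dmax y\<bar> \<le> \<bar>x - y\<bar>"
  unfolding sat_def by auto

lemma feedbackD_dist_le:
  assumes "Dmin \<le> x0" "x0 \<le> Dmax" "0 \<le> G1"
  shows "\<bar>feedbackD Dmin Dmax G1 sbar s Db - x0\<bar> \<le> \<bar>Db - x0\<bar> + G1 * \<bar>s - sbar\<bar>"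
proof -
  have "\<bar>feedbackD Dmin Dmax G1 sbar s Db - x0\<bar>
      = \<bar>sat Dmin Dmax (Db - G1 * (s - sbar)) - sat Dmin Dmax x0\<bar>"
    unfolding feedbackD_def sat_id[OF assms(1,2)] ..
  also have "\<dots> \<le> \<bar>(Db - G1 * (s - sbar)) - x0\<bar>"
    by (rule sat_dist_le) (use assms in linarith)
  also have "\<dots> = \<bar>(Db - x0) - G1 * (s - sbar)\<bar>"
    by (simp add: algebra_simps)
  also have "\<dots> \<le> \<bar>Db - x0\<bar> + G1 * \<bar>s - sbar\<bar>"
    using abs_triangle_ineq4[of "Db - x0" "G1 * (s - sbar)"] assms(3) by (simp add: abs_mult)
  finally show ?thesis .
qed

lemma eq_dist_ge:
  "\<bar>s t - sbar\<bar> \<le> eq_dist \<mu> s_in sbar s b Db t"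
  "\<bar>Db t - \<mu> sbar\<bar> \<le> eq_dist \<mu> s_in sbar s b Db t"
  unfolding eq_dist_def by (rule real_le_rsqrt; simp)+

lemma tendsto_of_exp_bound:
  fixes f :: "real \<Rightarrow> real"
  assumes "r > 0" and bound: "\<And>t. 0 \<le> t \<Longrightarrow> \<bar>f t - l\<bar> \<le> C * exp (- r * t)"
  shows "(f \<longlongrightarrow> l) at_top"
proof -
  have "filterlim (\<lambda>t. r * t) at_top at_top"
    by (rule filterlim_tendsto_pos_mult_at_top[OF tendsto_const \<open>r > 0\<close> filterlim_ident])
  then have "filterlim (\<lambda>t. - r * t) at_bot at_top"
    by (simp add: filterlim_uminus_at_top)
  then have "((\<lambda>t. exp (- r * t)) \<longlongrightarrow> 0) at_top"
    by (rule filterlim_compose[OF exp_at_bot])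
  then have "((\<lambda>t. C * exp (- r * t)) \<longlongrightarrow> 0) at_top"
    by (rule tendsto_mult_right_zero)
  moreover have "norm (f t - l) \<le> C * exp (- r * t)" if "0 \<le> t" for t
    using bound[OF that] by simp
  then have "\<forall>\<^sub>F t in at_top. norm (f t - l) \<le> C * exp (- r * t)"
    using eventually_ge_at_top by (rule eventually_mono[rotated])
  ultimately have "((\<lambda>t. f t - l) \<longlongrightarrow> 0) at_top" by (rule Lim_null_comparison[rotated])
  then show ?thesis by (rule LIM_zero_cancel)
qed

lemma exp_stable_imp_convergence:
  assumes stable: "cl_locally_exp_stable \<mu> s_in sbar Dmin Dmax G1 G2"
    and D: "Dmin \<le> \<mu> sbar" "\<mu> sbar \<le> Dmax" and G1: "G1 \<ge> 0"
  shows "\<exists>\<delta>>0. \<forall>s b Db.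
       (\<forall>T\<ge>0. cl_solution \<mu> s_in sbar Dmin Dmax G1 G2 T s b Db) \<and>
       eq_dist \<mu> s_in sbar s b Db 0 < \<delta> \<longrightarrow>
       (s \<longlongrightarrow> sbar) at_top \<and> (Db \<longlongrightarrow> \<mu> sbar) at_top \<and>
       ((\<lambda>t. feedbackD Dmin Dmax G1 sbar (s t) (Db t)) \<longlongrightarrow> \<mu> sbar) at_top"
proof -
  obtain \<delta> C r where "\<delta> > 0" "r > 0" and bound: "\<forall>T\<ge>0. \<forall>s b Db.
      cl_solution \<mu> s_in sbar Dmin Dmax G1 G2 T s b Db \<and> eq_dist \<mu> s_in sbar s b Db 0 < \<delta> \<longrightarrow>
      (\<forall>t\<in>{0..T}. eq_dist \<mu> s_in sbar s b Db t \<le> C * exp (- r * t) * eq_dist \<mu> s_in sbar s b Db 0)"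
    using stable unfolding cl_locally_exp_stable_def by blast
  show ?thesis
  proof (intro exI[of _ \<delta>] conjI allI impI \<open>\<delta> > 0\<close>)
    fix s b Db
    assume sol: "(\<forall>T\<ge>0. cl_solution \<mu> s_in sbar Dmin Dmax G1 G2 T s b Db) \<and>
      eq_dist \<mu> s_in sbar s b Db 0 < \<delta>"
    define C0 where "C0 = C * eq_dist \<mu> s_in sbar s b Db 0"
    have E: "eq_dist \<mu> s_in sbar s b Db t \<le> C0 * exp (- r * t)" if "0 \<le> t" for t
    proof -
      have "cl_solution \<mu> s_in sbar Dmin Dmax G1 G2 t s b Db" using sol that by blast
      with bound that sol have "\<forall>u\<in>{0..t}. eq_dist \<mu> s_in sbar s b Db u
          \<le> C * exp (- r * u) * eq_dist \<mu> s_in sbar s b Db 0"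
        by blast
      then have "eq_dist \<mu> s_in sbar s b Db t \<le> C * exp (- r * t) * eq_dist \<mu> s_in sbar s b Db 0"
        using that by simp
      then show ?thesis by (simp add: C0_def ac_simps)
    qed
    have s_le: "\<bar>s t - sbar\<bar> \<le> C0 * exp (- r * t)" and Db_le: "\<bar>Db t - \<mu> sbar\<bar> \<le> C0 * exp (- r * t)"
      if "0 \<le> t" for t
      using order_trans[OF eq_dist_ge(1) E[OF that]] order_trans[OF eq_dist_ge(2) E[OF that]] .
    show "(s \<longlongrightarrow> sbar) at_top" using \<open>r > 0\<close> s_le by (rule tendsto_of_exp_bound)
    show "(Db \<longlongrightarrow> \<mu> sbar) at_top" using \<open>r > 0\<close> Db_le by (rule tendsto_of_exp_bound)
    have "\<bar>feedbackD Dmin Dmax G1 sbar (s t) (Db t) - \<mu> sbar\<bar> \<le> (1 + G1) * C0 * exp (- r * t)"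
      if "0 \<le> t" for t
    proof -
      have "\<bar>feedbackD Dmin Dmax G1 sbar (s t) (Db t) - \<mu> sbar\<bar> \<le> \<bar>Db t - \<mu> sbar\<bar> + G1 * \<bar>s t - sbar\<bar>"
        by (rule feedbackD_dist_le[OF D G1])
      also have "\<dots> \<le> C0 * exp (- r * t) + G1 * (C0 * exp (- r * t))"
        by (rule add_mono[OF Db_le[OF that] mult_left_mono[OF s_le[OF that] G1]])
      finally show ?thesis by (simp add: algebra_simps)
    qed
    with \<open>r > 0\<close> show "((\<lambda>t. feedbackD Dmin Dmax G1 sbar (s t) (Db t)) \<longlongrightarrow> \<mu> sbar) at_top"
      by (rule tendsto_of_exp_bound)
  qed
qed

lemma mult_le_of_abs_le:
  fixes x R th e :: real
  assumes "\<bar>R\<bar> \<le> th * \<bar>e\<bar>"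
  shows "x * R \<le> th * (\<bar>x\<bar> * \<bar>e\<bar>)"
proof -
  have "x * R \<le> \<bar>x\<bar> * \<bar>R\<bar>" by (simp add: abs_mult[symmetric])
  also have "\<dots> \<le> \<bar>x\<bar> * (th * \<bar>e\<bar>)" using assms by (simp add: mult_left_mono)
  finally show ?thesis by (simp add: algebra_simps)
qed

lemma cross_remainder_bound:
  fixes k g c e z Re Rz th1 th2 :: real
  assumes "k \<ge> 0" "g \<ge> 0" "c \<ge> 0" "th1 \<ge> 0" "th2 \<ge> 0"
    and Re: "\<bar>Re\<bar> \<le> th1 * \<bar>e\<bar>" and Rz: "\<bar>Rz\<bar> \<le> th2 * \<bar>e\<bar>"
  shows "2*k*e*Re - g*Re*z - g*e*Rz + 2*c*z*Rz \<le> ((2*k + g/2)*th1 + (g + c)*th2) * (e^2 + z^2)"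
proof -
  have ez: "2 * (\<bar>e\<bar> * \<bar>z\<bar>) \<le> e^2 + z^2"
    using sum_squares_bound[of "\<bar>e\<bar>" "\<bar>z\<bar>"] by simp
  have "e * Re \<le> th1 * e^2" "(- z) * Re \<le> th1 * (\<bar>e\<bar> * \<bar>z\<bar>)"
    "(- e) * Rz \<le> th2 * e^2" "z * Rz \<le> th2 * (\<bar>e\<bar> * \<bar>z\<bar>)"
    using mult_le_of_abs_le[OF Re, of e] mult_le_of_abs_le[OF Re, of "- z"]
      mult_le_of_abs_le[OF Rz, of "- e"] mult_le_of_abs_le[OF Rz, of z]
    by (simp_all add: power2_eq_square abs_mult_self mult.commute)
  then have "2*k*(e*Re) + g*((- z) * Re) + g*((- e) * Rz) + 2*c*(z*Rz)
     \<le> 2*k*(th1 * e^2) + g*(th1 * (\<bar>e\<bar> * \<bar>z\<bar>)) + g*(th2 * e^2) + 2*c*(th2 * (\<bar>e\<bar> * \<bar>z\<bar>))"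
    using assms by (intro add_mono mult_left_mono) auto
  also have "\<dots> \<le> 2*k*(th1 * e^2) + g*(th1 * ((e^2 + z^2)/2)) + g*(th2 * e^2) + 2*c*(th2 * ((e^2 + z^2)/2))"
    using assms ez by (intro add_mono mult_left_mono order.refl) auto
  also have "\<dots> = ((2*k + g/2)*th1 + (g + c)*th2) * (e^2 + z^2) - (2*k*th1 + g*th2) * z^2"
    by (simp add: field_simps)
  also have "\<dots> \<le> ((2*k + g/2)*th1 + (g + c)*th2) * (e^2 + z^2)"
    using assms by simp
  finally show ?thesis by (simp add: algebra_simps)
qed

lemma lyapunov_form_rate_bound:
  fixes k g B c M mb Dmin D e z y Re Rz th1 th2 :: real
  assumes k: "k > 0" and g: "g > 0" and B: "B > 0" and Dmin: "Dmin > 0" and mb: "mb \<ge> 0"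
    and c: "c = B + g^2 / (2*k)"
    and M: "2*M*Dmin \<ge> 4*k*mb^2/g + g*mb^2/B + 1"
    and D: "D \<ge> Dmin"
    and Re: "\<bar>Re\<bar> \<le> th1 * \<bar>e\<bar>" and Rz: "\<bar>Rz\<bar> \<le> th2 * \<bar>e\<bar>"
    and th: "th1 \<ge> 0" "th2 \<ge> 0"
    and small: "(2*k + g/2)*th1 + (g + c)*th2 \<le> k*g/4" "(2*k + g/2)*th1 + (g + c)*th2 \<le> g*B/4"
  shows "2*k*e*(-g*e + B*z - mb*y + Re) - g*((-g*e + B*z - mb*y + Re)*z + e*(-k*e + Rz))
          + 2*c*z*(-k*e + Rz) + 2*M*y*(-D*y) \<le> -(k*g/2)*e^2 - (g*B/2)*z^2 - y^2"
proof -
  define Th where "Th = (2*k + g/2)*th1 + (g + c)*th2"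
  have "c > 0" using c k B by (simp add: add_pos_nonneg)
  have expand: "2*k*e*(-g*e + B*z - mb*y + Re) - g*((-g*e + B*z - mb*y + Re)*z + e*(-k*e + Rz))
          + 2*c*z*(-k*e + Rz) + 2*M*y*(-D*y) =
     -k*g*e^2 - g*B*z^2 + (-2*k*mb*e*y + g*mb*y*z) + (2*k*e*Re - g*Re*z - g*e*Rz + 2*c*z*Rz)
       - 2*M*D*y^2"
    using k unfolding c by (simp add: field_simps power2_eq_square)
  have young1: "-2*k*mb*e*y \<le> (k*g/4)*e^2 + (4*k*mb^2/g)*y^2"
  proof -
    have "0 \<le> (k/g)*((g/2)*e + 2*mb*y)^2" using k g by simp
    also have "\<dots> = (k*g/4)*e^2 + (4*k*mb^2/g)*y^2 + 2*k*mb*e*y"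
      using g by (simp add: field_simps power2_eq_square)
    finally show ?thesis by simp
  qed
  have young2: "g*mb*y*z \<le> (g*B/4)*z^2 + (g*mb^2/B)*y^2"
  proof -
    have "0 \<le> (g/B)*((B/2)*z - mb*y)^2" using B g by simp
    also have "\<dots> = (g*B/4)*z^2 + (g*mb^2/B)*y^2 - g*mb*y*z"
      using B by (simp add: field_simps power2_eq_square)
    finally show ?thesis by simp
  qed
  have "2*k*e*Re - g*Re*z - g*e*Rz + 2*c*z*Rz \<le> Th*e^2 + Th*z^2"
    using cross_remainder_bound[OF _ _ _ th Re Rz] k g \<open>c > 0\<close>
    unfolding Th_def by (simp add: distrib_left)
  moreover have "Th*e^2 \<le> (k*g/4)*e^2"
    using small(1) unfolding Th_def[symmetric] by (rule mult_right_mono) simp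
  moreover have "Th*z^2 \<le> (g*B/4)*z^2"
    using small(2) unfolding Th_def[symmetric] by (rule mult_right_mono) simp
  moreover have "M \<ge> 0"
  proof -
    have "4*k*mb^2/g + g*mb^2/B \<ge> 0" using k g B by simp
    then have "M * Dmin > 0" using M by linarith
    then show ?thesis using Dmin by (simp add: zero_less_mult_iff)
  qed
  then have "(4*k*mb^2/g + g*mb^2/B + 1) * y^2 \<le> (2*M*D) * y^2"
    using M mult_left_mono[OF D, of "2*M"] by (intro mult_right_mono) auto
  then have "(4*k*mb^2/g)*y^2 + (g*mb^2/B)*y^2 - 2*M*D*y^2 \<le> -(y^2)"
    by (simp add: algebra_simps)
  ultimately show ?thesis
    unfolding expand using young1 young2 by (simp add: algebra_simps)
qed

lemma s_remainder_bound:
  fixes e z y rho B p G1 mb d :: real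
  assumes rho: "\<bar>rho\<bar> \<le> d * \<bar>e\<bar>" and e: "\<bar>e\<bar> \<le> d" and z: "\<bar>z\<bar> \<le> d" and y: "\<bar>y\<bar> \<le> d"
    and d: "d \<le> 1" and B: "B > 0"
  shows "\<bar>-(mb + p*e + rho)*(B - e + y) + (mb + z - G1*e)*(B - e) - (-(B*(G1+p))*e + B*z - mb*y)\<bar>
         \<le> (B + 3 + \<bar>G1+p\<bar> + \<bar>p\<bar>) * d * \<bar>e\<bar>"
proof -
  have expand: "-(mb + p*e + rho)*(B - e + y) + (mb + z - G1*e)*(B - e) - (-(B*(G1+p))*e + B*z - mb*y)
     = -(B*rho) - e*z + (G1+p)*(e*e) + e*rho - p*(e*y) - rho*y"
    by (simp add: algebra_simps)
  have "\<bar>B*rho\<bar> \<le> B*(d*\<bar>e\<bar>)" using B rho by (simp add: abs_mult)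
  moreover have "\<bar>e*z\<bar> \<le> d*\<bar>e\<bar>"
    using mult_left_mono[OF z, of "\<bar>e\<bar>"] by (simp add: abs_mult mult.commute)
  moreover have "\<bar>(G1+p)*(e*e)\<bar> \<le> \<bar>G1+p\<bar>*(d*\<bar>e\<bar>)"
    using mult_left_mono[OF mult_right_mono[OF e, of "\<bar>e\<bar>"], of "\<bar>G1+p\<bar>"] by (simp add: abs_mult)
  moreover have "\<bar>e*rho\<bar> \<le> d*\<bar>e\<bar>"
  proof -
    have "\<bar>e*rho\<bar> \<le> 1*(d*\<bar>e\<bar>)" unfolding abs_mult using rho e d by (intro mult_mono) auto
    then show ?thesis by simp
  qed
  moreover have "\<bar>p*(e*y)\<bar> \<le> \<bar>p\<bar>*(d*\<bar>e\<bar>)"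
    using mult_left_mono[OF mult_left_mono[OF y, of "\<bar>e\<bar>"], of "\<bar>p\<bar>"] by (simp add: abs_mult mult.commute)
  moreover have "\<bar>rho*y\<bar> \<le> d*\<bar>e\<bar>"
  proof -
    have "\<bar>rho*y\<bar> \<le> (d*\<bar>e\<bar>)*1" unfolding abs_mult using rho y d by (intro mult_mono) auto
    then show ?thesis by simp
  qed
  ultimately have "\<bar>B*rho\<bar> + \<bar>e*z\<bar> + \<bar>(G1+p)*(e*e)\<bar> + \<bar>e*rho\<bar> + \<bar>p*(e*y)\<bar> + \<bar>rho*y\<bar>
      \<le> (B + 3 + \<bar>G1+p\<bar> + \<bar>p\<bar>) * d * \<bar>e\<bar>"
    by (simp add: algebra_simps)
  moreover have "\<bar>-(B*rho) - e*z + (G1+p)*(e*e) + e*rho - p*(e*y) - rho*y\<bar>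
     \<le> \<bar>B*rho\<bar> + \<bar>e*z\<bar> + \<bar>(G1+p)*(e*e)\<bar> + \<bar>e*rho\<bar> + \<bar>p*(e*y)\<bar> + \<bar>rho*y\<bar>"
    unfolding abs_le_iff
    using abs_ge_self[of "B*rho"] abs_ge_minus_self[of "B*rho"] abs_ge_self[of "e*z"]
      abs_ge_minus_self[of "e*z"] abs_ge_self[of "(G1+p)*(e*e)"] abs_ge_minus_self[of "(G1+p)*(e*e)"]
      abs_ge_self[of "e*rho"] abs_ge_minus_self[of "e*rho"] abs_ge_self[of "p*(e*y)"]
      abs_ge_minus_self[of "p*(e*y)"] abs_ge_self[of "rho*y"] abs_ge_minus_self[of "rho*y"]
    by linarith
  ultimately show ?thesis unfolding expand by linarith
qed

lemma Dbar_remainder_bound: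
  fixes e z G2 mb Dmin Dmax d :: real
  assumes z: "\<bar>z\<bar> \<le> d" and d: "d \<le> 1" and G2: "G2 > 0"
  shows "\<bar>- G2 * e * (mb + z - Dmin) * (Dmax - (mb + z)) + G2 * (mb - Dmin) * (Dmax - mb) * e\<bar>
     \<le> G2 * (\<bar>(Dmax - mb) - (mb - Dmin)\<bar> + 1) * d * \<bar>e\<bar>"
proof -
  define q where "q = (Dmax - mb) - (mb - Dmin)"
  have expand: "- G2 * e * (mb + z - Dmin) * (Dmax - (mb + z)) + G2 * (mb - Dmin) * (Dmax - mb) * e
     = - (G2 * e * (z * (q - z)))"
    unfolding q_def by (simp add: algebra_simps)
  have "\<bar>q - z\<bar> \<le> \<bar>q\<bar> + 1" using z d by linarith
  then have "\<bar>z * (q - z)\<bar> \<le> d * (\<bar>q\<bar> + 1)" using z by (simp add: abs_mult mult_mono)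
  then have "G2 * \<bar>e\<bar> * \<bar>z * (q - z)\<bar> \<le> G2 * \<bar>e\<bar> * (d * (\<bar>q\<bar> + 1))"
    using G2 by (intro mult_left_mono) auto
  moreover have "\<bar>- (G2 * e * (z * (q - z)))\<bar> = G2 * \<bar>e\<bar> * \<bar>z * (q - z)\<bar>"
    using G2 by (simp add: abs_mult)
  ultimately show ?thesis unfolding expand q_def[symmetric] by (simp add: algebra_simps)
qed

lemma lyapunov_form_lower_bound:
  fixes k g B c M e z y :: real
  assumes k: "k > 0" and B: "B > 0" and M: "M > 0" and c: "c = B + g^2 / (2*k)"
  shows "min (min (k/2) B) M * (e^2 + z^2 + y^2) \<le> k*e^2 - g*e*z + c*z^2 + M*y^2"
proof -
  have sq: "k*e^2 - g*e*z + c*z^2 + M*y^2 = (k/2)*e^2 + B*z^2 + M*y^2 + (k*e - g*z)^2 / (2*k)"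
    using k unfolding c by (simp add: field_simps power2_eq_square)
  have "min (min (k/2) B) M * e^2 \<le> (k/2)*e^2" "min (min (k/2) B) M * z^2 \<le> B*z^2"
    "min (min (k/2) B) M * y^2 \<le> M*y^2"
    by (intro mult_right_mono; simp)+
  moreover have "0 \<le> (k*e - g*z)^2 / (2*k)" using k by simp
  ultimately show ?thesis unfolding sq by (simp add: algebra_simps)
qed

lemma lyapunov_form_upper_bound:
  fixes k g c M e z y :: real
  assumes "k \<ge> 0" "g \<ge> 0" "c \<ge> 0" "M \<ge> 0"
  shows "k*e^2 - g*e*z + c*z^2 + M*y^2 \<le> (k + g + c + M) * (e^2 + z^2 + y^2)"
proof -
  have "- (2*e*z) \<le> e^2 + z^2" using sum_squares_bound[of e "- z"] by simp
  then have "- (e*z) \<le> e^2 + z^2" using zero_le_power2[of e] zero_le_power2[of z] by linarith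
  then have "g*(- (e*z)) \<le> g*(e^2 + z^2)" using assms by (intro mult_left_mono) auto
  moreover have "0 \<le> k*(z^2 + y^2)" "0 \<le> g*y^2" "0 \<le> c*(e^2 + y^2)" "0 \<le> M*(e^2 + z^2)"
    using assms by auto
  ultimately show ?thesis by (simp add: algebra_simps)
qed

lemma sum_squares_shear_bounds:
  fixes e z y :: real
  shows "e^2 + (y - e)^2 + z^2 \<le> 3 * (e^2 + z^2 + y^2)"
    and "e^2 + z^2 + y^2 \<le> 3 * (e^2 + (y - e)^2 + z^2)"
proof -
  have sq: "(y - e)^2 \<le> 2*y^2 + 2*e^2" "y^2 \<le> 2*(y - e)^2 + 2*e^2"
    using zero_le_power2[of "y + e"] zero_le_power2[of "y - 2*e"]
    by (simp_all add: power2_eq_square algebra_simps)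
  note nonneg = zero_le_power2[of z] zero_le_power2[of y] zero_le_power2[of "y - e"]
  show "e^2 + (y - e)^2 + z^2 \<le> 3 * (e^2 + z^2 + y^2)" using sq nonneg unfolding distrib_left by linarith
  show "e^2 + z^2 + y^2 \<le> 3 * (e^2 + (y - e)^2 + z^2)" using sq nonneg unfolding distrib_left by linarith
qed

locale chemostat_feedback =
  fixes \<mu> \<mu>' :: "real \<Rightarrow> real" and s_in sbar Dmin Dmax G1 G2 :: real
  assumes mu_deriv_sbar: "(\<mu> has_real_derivative \<mu>' sbar) (at sbar within {0..s_in})"
    and sbar: "0 < sbar" "sbar < s_in"
    and D_bounds: "0 < Dmin" "Dmin < \<mu> sbar" "\<mu> sbar < Dmax"
    and gains: "G1 > 0" "G2 > 0" "G1 > - \<mu>' sbar"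
begin

definition B :: real where "B = s_in - sbar"
definition mb :: real where "mb = \<mu> sbar"
definition p :: real where "p = \<mu>' sbar"
definition g :: real where "g = B * (G1 + p)"
definition k :: real where "k = G2 * (mb - Dmin) * (Dmax - mb)"
definition c :: real where "c = B + g^2 / (2*k)"
text \<open>\<open>M\<close> lets \<open>2 M Dmin y\<^sup>2\<close> absorb what Young's inequality leaves of the cross terms in
  \<open>y = s + b - s_in\<close>; \<open>lin_tol\<close> is a relative error of the linearisation of \<open>\<mu>\<close> at \<open>sbar\<close>
  for which the nonlinear remainders cost at most a quarter of \<open>k g e\<^sup>2 + g B z\<^sup>2\<close>.\<close>
definition M :: real where "M = (4*k*mb^2/g + g*mb^2/B + 1) / (2*Dmin)"

definition Ls :: real where "Ls = B + 3 + \<bar>G1 + p\<bar> + \<bar>p\<bar>"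
definition LD :: real where "LD = G2 * (\<bar>(Dmax - mb) - (mb - Dmin)\<bar> + 1)"
definition lin_tol :: real
  where "lin_tol = min 1 (min (k*g/4) (g*B/4) / ((2*k + g/2)*Ls + (g + c)*LD))"
definition diss :: real where "diss = min (min (k*g/2) (g*B/2)) 1"

lemma lyap_constants:
  "B > 0" "mb \<ge> 0" "g > 0" "k > 0" "c > 0" "M > 0" "2*M*Dmin \<ge> 4*k*mb^2/g + g*mb^2/B + 1"
proof -
  show "B > 0" "mb \<ge> 0" using sbar D_bounds unfolding B_def mb_def by auto
  then show "g > 0" using gains unfolding g_def p_def by simp
  show "k > 0" using gains D_bounds unfolding k_def mb_def by simp
  then show "c > 0" using \<open>B > 0\<close> unfolding c_def by (simp add: add_pos_nonneg)
  show "M > 0" using \<open>k > 0\<close> \<open>g > 0\<close> \<open>B > 0\<close> D_bounds unfolding M_def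
    by (simp add: add_nonneg_pos)
  show "2*M*Dmin \<ge> 4*k*mb^2/g + g*mb^2/B + 1" using D_bounds unfolding M_def by (simp add: field_simps)
qed

lemma lin_tol_bounds:
  "0 < lin_tol" "lin_tol \<le> 1"
  "(2*k + g/2)*(Ls*lin_tol) + (g + c)*(LD*lin_tol) \<le> k*g/4"
  "(2*k + g/2)*(Ls*lin_tol) + (g + c)*(LD*lin_tol) \<le> g*B/4"
proof -
  define K where "K = (2*k + g/2)*Ls + (g + c)*LD"
  have "Ls > 0" "LD > 0" using lyap_constants gains unfolding Ls_def LD_def by (simp_all add: add_nonneg_pos)
  then have "K > 0" using lyap_constants unfolding K_def by (simp add: add_pos_pos)
  have "min (k*g/4) (g*B/4) > 0" using lyap_constants by simp
  then show "0 < lin_tol" "lin_tol \<le> 1" using \<open>K > 0\<close> unfolding lin_tol_def K_def[symmetric] by auto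
  have "lin_tol * K \<le> min (k*g/4) (g*B/4)"
    using \<open>K > 0\<close> unfolding lin_tol_def K_def[symmetric] by (auto simp: min_def field_simps)
  moreover have "(2*k + g/2)*(Ls*lin_tol) + (g + c)*(LD*lin_tol) = lin_tol * K"
    unfolding K_def by (simp add: algebra_simps)
  ultimately show "(2*k + g/2)*(Ls*lin_tol) + (g + c)*(LD*lin_tol) \<le> k*g/4"
    "(2*k + g/2)*(Ls*lin_tol) + (g + c)*(LD*lin_tol) \<le> g*B/4" by auto
qed

lemma mu_linearization:
  "\<exists>r>0. \<forall>x\<in>{0..s_in}. \<bar>x - sbar\<bar> < r \<longrightarrow> \<bar>\<mu> x - mb - p*(x - sbar)\<bar> \<le> lin_tol * \<bar>x - sbar\<bar>"
proof -
  have "\<forall>e>0. \<exists>d>0. \<forall>x\<in>{0..s_in}. norm (x - sbar) < d \<longrightarrow>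
      norm (\<mu> x - \<mu> sbar - \<mu>' sbar * (x - sbar)) \<le> e * norm (x - sbar)"
    using mu_deriv_sbar unfolding has_field_derivative_def has_derivative_within_alt by blast
  then show ?thesis using lin_tol_bounds(1) unfolding real_norm_def mb_def p_def by blast
qed

definition s_rate :: "real \<Rightarrow> real \<Rightarrow> real \<Rightarrow> real"
  where "s_rate s b Db = - \<mu> s * b + feedbackD Dmin Dmax G1 sbar s Db * (s_in - s)"
definition b_rate :: "real \<Rightarrow> real \<Rightarrow> real \<Rightarrow> real"
  where "b_rate s b Db = \<mu> s * b - feedbackD Dmin Dmax G1 sbar s Db * b"
definition Db_rate :: "real \<Rightarrow> real \<Rightarrow> real"
  where "Db_rate s Db = - G2 * (s - sbar) * (Db - Dmin) * (Dmax - Db)"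

text \<open>Along \<open>e' = - g e + B z\<close>, \<open>z' = - k e\<close> (the linearisation in \<open>e = s - sbar\<close>,
  \<open>z = Db - mb\<close>) the choice of \<open>c\<close> cancels the \<open>e z\<close> term in the derivative of
  \<open>k e\<^sup>2 - g e z + c z\<^sup>2\<close>, leaving \<open>- k g e\<^sup>2 - g B z\<^sup>2\<close>.\<close>
definition lyap :: "real \<Rightarrow> real \<Rightarrow> real \<Rightarrow> real"
  where "lyap s b Db = k*(s - sbar)^2 - g*(s - sbar)*(Db - mb) + c*(Db - mb)^2 + M*(s + b - s_in)^2"
definition lyap_rate :: "real \<Rightarrow> real \<Rightarrow> real \<Rightarrow> real"
  where "lyap_rate s b Db =
    2*k*(s - sbar) * s_rate s b Db - g*(s_rate s b Db * (Db - mb) + (s - sbar) * Db_rate s Db)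
    + 2*c*(Db - mb) * Db_rate s Db + 2*M*(s + b - s_in) * (s_rate s b Db + b_rate s b Db)"
definition dev :: "real \<Rightarrow> real \<Rightarrow> real \<Rightarrow> real"
  where "dev s b Db = (s - sbar)^2 + (Db - mb)^2 + (s + b - s_in)^2"

lemma feedbackD_unsaturated:
  assumes e: "\<bar>s - sbar\<bar> \<le> d" and z: "\<bar>Db - mb\<bar> \<le> d"
    and d: "(1 + G1)*d \<le> mb - Dmin" "(1 + G1)*d \<le> Dmax - mb"
  shows "feedbackD Dmin Dmax G1 sbar s Db = Db - G1 * (s - sbar)"
proof -
  have "\<bar>G1 * (s - sbar)\<bar> \<le> G1 * d" using e gains by (simp add: abs_mult)
  then have "\<bar>(Db - mb) - G1 * (s - sbar)\<bar> \<le> (1 + G1)*d"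
    using z abs_triangle_ineq4[of "Db - mb" "G1 * (s - sbar)"] by (simp add: distrib_right)
  then show ?thesis unfolding feedbackD_def using d by (intro sat_id) (auto simp: abs_le_iff)
qed

lemma s_rate_remainder:
  assumes small: "\<bar>s - sbar\<bar> \<le> lin_tol" "\<bar>Db - mb\<bar> \<le> lin_tol" "\<bar>s + b - s_in\<bar> \<le> lin_tol"
    and D: "feedbackD Dmin Dmax G1 sbar s Db = Db - G1 * (s - sbar)"
    and lin: "\<bar>\<mu> s - mb - p*(s - sbar)\<bar> \<le> lin_tol * \<bar>s - sbar\<bar>"
  shows "\<bar>s_rate s b Db - (- g*(s - sbar) + B*(Db - mb) - mb*(s + b - s_in))\<bar>
    \<le> Ls * lin_tol * \<bar>s - sbar\<bar>"
proof -
  define e z y where "e = s - sbar" and "z = Db - mb" and "y = s + b - s_in"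
  have "s_rate s b Db - (- g*e + B*z - mb*y)
      = -(mb + p*e + (\<mu> s - mb - p*e))*(B - e + y) + (mb + z - G1*e)*(B - e)
        - (-(B*(G1+p))*e + B*z - mb*y)"
    unfolding s_rate_def D g_def by (simp add: e_def z_def y_def B_def algebra_simps)
  with s_remainder_bound[OF lin[folded e_def] small[folded e_def z_def y_def]
         lin_tol_bounds(2) lyap_constants(1), of mb p G1]
  show ?thesis unfolding Ls_def e_def z_def y_def by (simp add: mult.assoc)
qed

lemma Db_rate_remainder:
  assumes "\<bar>Db - mb\<bar> \<le> lin_tol"
  shows "\<bar>Db_rate s Db + k*(s - sbar)\<bar> \<le> LD * lin_tol * \<bar>s - sbar\<bar>"
proof -
  have "Db_rate s Db + k*(s - sbar) = - G2 * (s - sbar) * (mb + (Db - mb) - Dmin) * (Dmax - (mb + (Db - mb)))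
      + G2 * (mb - Dmin) * (Dmax - mb) * (s - sbar)"
    unfolding Db_rate_def k_def by (simp add: algebra_simps)
  with Dbar_remainder_bound[OF assms lin_tol_bounds(2) gains(2), of "s - sbar" mb Dmin Dmax]
  show ?thesis unfolding LD_def by (simp add: mult.assoc)
qed

lemma lyap_rate_le_near_equilibrium:
  assumes e: "\<bar>s - sbar\<bar> \<le> d" and z: "\<bar>Db - mb\<bar> \<le> d" and y: "\<bar>s + b - s_in\<bar> \<le> d"
    and d: "d \<le> lin_tol" "(1 + G1)*d \<le> mb - Dmin" "(1 + G1)*d \<le> Dmax - mb"
    and lin: "\<bar>\<mu> s - mb - p*(s - sbar)\<bar> \<le> lin_tol * \<bar>s - sbar\<bar>"
  shows "lyap_rate s b Db \<le> - diss * dev s b Db"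
proof -
  have small: "\<bar>s - sbar\<bar> \<le> lin_tol" "\<bar>Db - mb\<bar> \<le> lin_tol" "\<bar>s + b - s_in\<bar> \<le> lin_tol"
    using e z y d(1) by linarith+
  note D = feedbackD_unsaturated[OF e z d(2,3)]
  define e z y where "e = s - sbar" and "z = Db - mb" and "y = s + b - s_in"
  define Re where "Re = s_rate s b Db - (-g*e + B*z - mb*y)"
  define Rz where "Rz = Db_rate s Db + k*e"
  have Re_le: "\<bar>Re\<bar> \<le> (Ls*lin_tol) * \<bar>e\<bar>"
    using s_rate_remainder[OF small D lin] unfolding Re_def e_def z_def y_def by simp
  have Rz_le: "\<bar>Rz\<bar> \<le> (LD*lin_tol) * \<bar>e\<bar>"
    using Db_rate_remainder[OF small(2)] unfolding Rz_def e_def by simp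
  have D_ge: "feedbackD Dmin Dmax G1 sbar s Db \<ge> Dmin"
    unfolding feedbackD_def using D_bounds by (intro sat_ge_lower) simp
  have b_eq: "b_rate s b Db = - feedbackD Dmin Dmax G1 sbar s Db * y - s_rate s b Db"
    unfolding s_rate_def b_rate_def y_def by (simp add: algebra_simps)
  have s_eq: "s_rate s b Db = -g*e + B*z - mb*y + Re" and Db_eq: "Db_rate s Db = -k*e + Rz"
    unfolding Re_def Rz_def by simp_all
  have "lyap_rate s b Db =
      2*k*e*(-g*e + B*z - mb*y + Re) - g*((-g*e + B*z - mb*y + Re)*z + e*(-k*e + Rz))
      + 2*c*z*(-k*e + Rz) + 2*M*y*(- feedbackD Dmin Dmax G1 sbar s Db * y)"
    unfolding lyap_rate_def b_eq s_eq Db_eq e_def[symmetric] z_def[symmetric] y_def[symmetric]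
    by (simp add: algebra_simps)
  also have "\<dots> \<le> -(k*g/2)*e^2 - (g*B/2)*z^2 - y^2"
    using lin_tol_bounds lyap_constants D_bounds gains
    by (intro lyapunov_form_rate_bound[OF _ _ _ _ _ c_def _ D_ge Re_le Rz_le])
       (auto simp: Ls_def LD_def add_nonneg_pos)
  also have "\<dots> \<le> - diss * dev s b Db"
  proof -
    have "diss*e^2 \<le> (k*g/2)*e^2" "diss*z^2 \<le> (g*B/2)*z^2" "diss*y^2 \<le> 1*y^2"
      unfolding diss_def by (intro mult_right_mono; simp)+
    then show ?thesis unfolding dev_def e_def[symmetric] z_def[symmetric] y_def[symmetric]
      by (simp add: algebra_simps)
  qed
  finally show ?thesis .
qed

lemma lyap_has_derivative:
  assumes "cl_solution \<mu> s_in sbar Dmin Dmax G1 G2 T s b Db" "t \<in> {0..T}"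
  shows "((\<lambda>t. lyap (s t) (b t) (Db t)) has_real_derivative lyap_rate (s t) (b t) (Db t))
           (at t within {0..T})"
proof -
  have "(s has_real_derivative s_rate (s t) (b t) (Db t)) (at t within {0..T})"
    "(b has_real_derivative b_rate (s t) (b t) (Db t)) (at t within {0..T})"
    "(Db has_real_derivative Db_rate (s t) (Db t)) (at t within {0..T})"
    using assms unfolding cl_solution_def Let_def s_rate_def b_rate_def Db_rate_def by auto
  then show ?thesis unfolding lyap_def lyap_rate_def
    by (auto intro!: derivative_eq_intros simp: algebra_simps)
qed

lemma lyap_bounds:
  "min (min (k/2) B) M * dev s b Db \<le> lyap s b Db"
  "lyap s b Db \<le> (k + g + c + M) * dev s b Db"
  using lyapunov_form_lower_bound[OF lyap_constants(4,1,6) c_def]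
    lyapunov_form_upper_bound[of k g c M] lyap_constants
  unfolding lyap_def dev_def by auto

lemma dev_eq_dist:
  "dev (s t) (b t) (Db t) \<le> 3 * (eq_dist \<mu> s_in sbar s b Db t)^2"
  "(eq_dist \<mu> s_in sbar s b Db t)^2 \<le> 3 * dev (s t) (b t) (Db t)"
proof -
  have shear: "s t + b t - s_in - (s t - sbar) = b t - (s_in - sbar)" by simp
  have eq: "(eq_dist \<mu> s_in sbar s b Db t)^2
      = (s t - sbar)^2 + (b t - (s_in - sbar))^2 + (Db t - mb)^2"
    unfolding eq_dist_def mb_def by simp
  note bounds = sum_squares_shear_bounds[where e = "s t - sbar" and z = "Db t - mb" and y = "s t + b t - s_in", unfolded shear]
  show "dev (s t) (b t) (Db t) \<le> 3 * (eq_dist \<mu> s_in sbar s b Db t)^2"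
    unfolding dev_def eq by (rule bounds(2))
  show "(eq_dist \<mu> s_in sbar s b Db t)^2 \<le> 3 * dev (s t) (b t) (Db t)"
    unfolding dev_def eq by (rule bounds(1))
qed

lemma lyap_rate_le_on_sublevel:
  "\<exists>\<epsilon>>0. \<exists>a>0. \<forall>s b Db. s \<in> {0..s_in} \<and> lyap s b Db < \<epsilon> \<longrightarrow>
     lyap_rate s b Db \<le> - a * lyap s b Db"
proof -
  obtain r where r: "r > 0" and lin: "\<And>x. x \<in> {0..s_in} \<Longrightarrow> \<bar>x - sbar\<bar> < r \<Longrightarrow>
      \<bar>\<mu> x - mb - p*(x - sbar)\<bar> \<le> lin_tol * \<bar>x - sbar\<bar>"
    using mu_linearization by blast
  define d where "d = min (min lin_tol r) (min ((mb - Dmin)/(1 + G1)) ((Dmax - mb)/(1 + G1)))"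
  have "0 < 1 + G1" using gains by simp
  have d: "d > 0" "d \<le> lin_tol" "d \<le> r" "(1 + G1)*d \<le> mb - Dmin" "(1 + G1)*d \<le> Dmax - mb"
  proof -
    show "d > 0" unfolding d_def using lin_tol_bounds(1) r D_bounds \<open>0 < 1 + G1\<close> by (simp add: mb_def)
    show "d \<le> lin_tol" "d \<le> r" unfolding d_def by auto
    have "d \<le> (mb - Dmin)/(1 + G1)" "d \<le> (Dmax - mb)/(1 + G1)" unfolding d_def by auto
    then show "(1 + G1)*d \<le> mb - Dmin" "(1 + G1)*d \<le> Dmax - mb"
      using \<open>0 < 1 + G1\<close> by (simp_all add: pos_le_divide_eq mult.commute)
  qed
  define m0 where "m0 = min (min (k/2) B) M"
  define M0 where "M0 = k + g + c + M"
  have "m0 > 0" "M0 > 0" using lyap_constants unfolding m0_def M0_def by auto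
  have "diss > 0" using lyap_constants unfolding diss_def by auto
  show ?thesis
  proof (intro exI conjI allI impI)
    show "m0 * d^2 > 0" "diss / M0 > 0" using \<open>m0 > 0\<close> \<open>M0 > 0\<close> \<open>diss > 0\<close> d(1) by auto
    fix s b Db assume sb: "s \<in> {0..s_in} \<and> lyap s b Db < m0 * d^2"
    then have "m0 * dev s b Db < m0 * d^2" using lyap_bounds(1)[of s b Db] unfolding m0_def by linarith
    then have "dev s b Db < d^2" using \<open>m0 > 0\<close> by simp
    then have "(s - sbar)^2 < d^2" "(Db - mb)^2 < d^2" "(s + b - s_in)^2 < d^2"
      using zero_le_power2[of "s - sbar"] zero_le_power2[of "Db - mb"] zero_le_power2[of "s + b - s_in"]
      unfolding dev_def by linarith+
    moreover have "\<bar>x\<bar> < d" if "x^2 < d^2" for x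
      using power2_less_imp_less[of "\<bar>x\<bar>" d] that d(1) by simp
    ultimately have "\<bar>s - sbar\<bar> < d" "\<bar>Db - mb\<bar> < d" "\<bar>s + b - s_in\<bar> < d" by blast+
    then have "lyap_rate s b Db \<le> - diss * dev s b Db"
      using d sb lin[of s] by (intro lyap_rate_le_near_equilibrium) auto
    moreover have "(diss / M0) * lyap s b Db \<le> (diss / M0) * (M0 * dev s b Db)"
      using lyap_bounds(2)[of s b Db] \<open>M0 > 0\<close> \<open>diss > 0\<close> unfolding M0_def by (intro mult_left_mono) auto
    ultimately show "lyap_rate s b Db \<le> - (diss / M0) * lyap s b Db" using \<open>M0 > 0\<close> by simp
  qed
qed

lemma lyap_comparable_eq_dist:
  "lyap (s t) (b t) (Db t) \<le> (k + g + c + M) * (3 * (eq_dist \<mu> s_in sbar s b Db t)^2)"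
  "min (min (k/2) B) M * (eq_dist \<mu> s_in sbar s b Db t)^2 \<le> 3 * lyap (s t) (b t) (Db t)"
proof -
  have "lyap (s t) (b t) (Db t) \<le> (k + g + c + M) * dev (s t) (b t) (Db t)" by (rule lyap_bounds(2))
  also have "\<dots> \<le> (k + g + c + M) * (3 * (eq_dist \<mu> s_in sbar s b Db t)^2)"
    using dev_eq_dist(1) lyap_constants by (intro mult_left_mono) auto
  finally show "lyap (s t) (b t) (Db t) \<le> (k + g + c + M) * (3 * (eq_dist \<mu> s_in sbar s b Db t)^2)" .
  have "min (min (k/2) B) M * (eq_dist \<mu> s_in sbar s b Db t)^2
      \<le> min (min (k/2) B) M * (3 * dev (s t) (b t) (Db t))"
    using dev_eq_dist(2) lyap_constants by (intro mult_left_mono) auto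
  also have "\<dots> \<le> 3 * lyap (s t) (b t) (Db t)" using lyap_bounds(1) by simp
  finally show "min (min (k/2) B) M * (eq_dist \<mu> s_in sbar s b Db t)^2 \<le> 3 * lyap (s t) (b t) (Db t)" .
qed

lemma lyap_exp_decay_on_solutions:
  obtains \<epsilon> a where "\<epsilon> > 0" "a > 0"
    "\<And>T s b Db t. cl_solution \<mu> s_in sbar Dmin Dmax G1 G2 T s b Db \<Longrightarrow>
       lyap (s 0) (b 0) (Db 0) < \<epsilon> \<Longrightarrow> t \<in> {0..T} \<Longrightarrow>
       lyap (s t) (b t) (Db t) \<le> lyap (s 0) (b 0) (Db 0) * exp (- a * t)"
proof -
  obtain \<epsilon> a where "\<epsilon> > 0" "a > 0" and rate: "\<And>s b Db. s \<in> {0..s_in} \<Longrightarrow> lyap s b Db < \<epsilon> \<Longrightarrow>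
      lyap_rate s b Db \<le> - a * lyap s b Db"
    using lyap_rate_le_on_sublevel by blast
  show thesis
  proof (rule that[OF \<open>\<epsilon> > 0\<close> \<open>a > 0\<close>])
    fix T s b Db t
    assume sol: "cl_solution \<mu> s_in sbar Dmin Dmax G1 G2 T s b Db"
      and start: "lyap (s 0) (b 0) (Db 0) < \<epsilon>" and t: "t \<in> {0..T}"
    define V where "V t = lyap (s t) (b t) (Db t)" for t
    have dV: "(V has_real_derivative lyap_rate (s u) (b u) (Db u)) (at u within {0..T})"
      if "u \<in> {0..T}" for u
      unfolding V_def using lyap_has_derivative[OF sol that] .
    have "0 \<le> min (min (k/2) B) M * dev (s 0) (b 0) (Db 0)"
      using lyap_constants unfolding dev_def by simp
    then have "0 \<le> V 0" using lyap_bounds(1) unfolding V_def by (rule order_trans)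
    moreover have "continuous_on {0..T} V" by (rule DERIV_continuous_on[OF dV])
    moreover have "(V has_real_derivative lyap_rate (s u) (b u) (Db u)) (at u)
        \<and> lyap_rate (s u) (b u) (Db u) \<le> - a * V u" if "0 < u" "u < T" "V u < \<epsilon>" for u
    proof
      have "at u within {0..T} = at u" using that by (intro at_within_Icc_at) auto
      then show "(V has_real_derivative lyap_rate (s u) (b u) (Db u)) (at u)"
        using dV[of u] that by simp
      show "lyap_rate (s u) (b u) (Db u) \<le> - a * V u"
        using rate[of "s u" "b u" "Db u"] sol that unfolding V_def cl_solution_def by auto
    qed
    ultimately have "\<forall>t\<in>{0..T}. V t \<le> V 0 * exp (- a * t)"
      using start \<open>a > 0\<close> unfolding V_def[symmetric] by (intro lyapunov_exp_decay) auto
    then show "lyap (s t) (b t) (Db t) \<le> lyap (s 0) (b 0) (Db 0) * exp (- a * t)"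
      using t unfolding V_def by blast
  qed
qed

theorem locally_exp_stable: "cl_locally_exp_stable \<mu> s_in sbar Dmin Dmax G1 G2"
proof -
  obtain \<epsilon> a where "\<epsilon> > 0" "a > 0" and decay: "\<And>T s b Db t.
      cl_solution \<mu> s_in sbar Dmin Dmax G1 G2 T s b Db \<Longrightarrow> lyap (s 0) (b 0) (Db 0) < \<epsilon> \<Longrightarrow>
      t \<in> {0..T} \<Longrightarrow> lyap (s t) (b t) (Db t) \<le> lyap (s 0) (b 0) (Db 0) * exp (- a * t)"
    using lyap_exp_decay_on_solutions by metis
  define m0 where "m0 = min (min (k/2) B) M"
  define M0 where "M0 = k + g + c + M"
  have "m0 > 0" "M0 > 0" using lyap_constants unfolding m0_def M0_def by auto
  define \<delta> where "\<delta> = sqrt (\<epsilon> / (3*M0))"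
  define C where "C = 3 * sqrt (M0/m0)"
  have "\<delta> > 0" "C > 0" "a/2 > 0" using \<open>\<epsilon> > 0\<close> \<open>a > 0\<close> \<open>m0 > 0\<close> \<open>M0 > 0\<close>
    unfolding \<delta>_def C_def by auto
  have "eq_dist \<mu> s_in sbar s b Db t \<le> C * exp (- (a/2) * t) * eq_dist \<mu> s_in sbar s b Db 0"
    if sol: "cl_solution \<mu> s_in sbar Dmin Dmax G1 G2 T s b Db"
      and start: "eq_dist \<mu> s_in sbar s b Db 0 < \<delta>" and t: "t \<in> {0..T}" for T s b Db t
  proof -
    define V where "V t = lyap (s t) (b t) (Db t)" for t
    define E where "E t = eq_dist \<mu> s_in sbar s b Db t" for t
    have E_nonneg: "0 \<le> E t" for t unfolding E_def eq_dist_def by simp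
    note V_upper = lyap_comparable_eq_dist(1)[where s = s and b = b and Db = Db, folded V_def E_def M0_def]
    note E_upper = lyap_comparable_eq_dist(2)[where s = s and b = b and Db = Db, folded V_def E_def m0_def]
    have "(E 0)^2 < \<delta>^2" using start E_nonneg[of 0] unfolding E_def by (intro power_strict_mono) auto
    then have "V 0 < \<epsilon>"
      using V_upper[of 0] \<open>M0 > 0\<close> \<open>\<epsilon> > 0\<close> unfolding \<delta>_def by (simp add: field_simps)
    then have "m0 * (E t)^2 \<le> 3 * (V 0 * exp (- a * t))"
      using E_upper[of t] decay[OF sol _ t] unfolding V_def by fastforce
    also have "\<dots> \<le> 3 * ((M0 * (3 * (E 0)^2)) * exp (- a * t))"
      by (rule mult_left_mono[OF mult_right_mono[OF V_upper[of 0]]]) auto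
    also have "\<dots> = m0 * (C * exp (- (a/2) * t) * E 0)^2"
    proof -
      have "C^2 = 9 * (M0 / m0)" unfolding C_def using \<open>m0 > 0\<close> \<open>M0 > 0\<close> by (simp add: power_mult_distrib)
      moreover have "(exp (- (a/2) * t))^2 = exp (- a * t)" by (simp add: power2_eq_square flip: exp_add)
      ultimately have "(C * exp (- (a/2) * t) * E 0)^2 = 9 * (M0 / m0) * exp (- a * t) * (E 0)^2"
        by (simp only: power_mult_distrib)
      then show ?thesis using \<open>m0 > 0\<close> by simp
    qed
    finally have "(E t)^2 \<le> (C * exp (- (a/2) * t) * E 0)^2" using \<open>m0 > 0\<close> by simp
    moreover have "0 \<le> C * exp (- (a/2) * t) * E 0" using \<open>C > 0\<close> E_nonneg[of 0] by simp
    ultimately show ?thesis unfolding E_def by (rule power2_le_imp_le)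
  qed
  then show ?thesis
    unfolding cl_locally_exp_stable_def using \<open>\<delta> > 0\<close> \<open>C > 0\<close> \<open>a/2 > 0\<close> by blast
qed

end

theorem proposition2:
  fixes \<mu> \<mu>' :: "real \<Rightarrow> real" and s_in sbar Dmin Dmax G1 G2 :: real
  assumes s_in_pos: "s_in > 0"
    and mu_deriv: "\<And>x. x \<in> {0..s_in} \<Longrightarrow> (\<mu> has_real_derivative \<mu>' x) (at x within {0..s_in})"
    and mu'_cont: "continuous_on {0..s_in} \<mu>'"
    and mu_nonneg: "\<And>x. x \<in> {0..s_in} \<Longrightarrow> \<mu> x \<ge> 0"
    and mu0: "\<mu> 0 = 0"
    and sbar: "0 < sbar" "sbar < s_in"
    and Dbounds: "0 < Dmin" "Dmin < \<mu> sbar" "\<mu> sbar < Dmax"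
    and gains: "G1 > 0" "G2 > 0" "G1 > - \<mu>' sbar"
  shows "cl_locally_exp_stable \<mu> s_in sbar Dmin Dmax G1 G2 \<and>
    (\<exists>\<delta>>0. \<forall>s b Db.
       (\<forall>T\<ge>0. cl_solution \<mu> s_in sbar Dmin Dmax G1 G2 T s b Db) \<and>
       eq_dist \<mu> s_in sbar s b Db 0 < \<delta> \<longrightarrow>
       (s \<longlongrightarrow> sbar) at_top \<and> (Db \<longlongrightarrow> \<mu> sbar) at_top \<and>
       ((\<lambda>t. feedbackD Dmin Dmax G1 sbar (s t) (Db t)) \<longlongrightarrow> \<mu> sbar) at_top)"
proof -
  interpret chemostat_feedback \<mu> \<mu>' s_in sbar Dmin Dmax G1 G2
    using mu_deriv[of sbar] sbar Dbounds gains by unfold_locales auto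
  show ?thesis
    using locally_exp_stable exp_stable_imp_convergence[OF locally_exp_stable] Dbounds gains
    by auto
qed

end
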